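(* Let $(t_\varepsilon)_\varepsilon$ be the net defined below. For every compact $K\subseteq\mathbb{R}^2$ and every $\delta>0$ there exist $\eta>0$ and $\varepsilon_0\in(0,1]$ such that every principal minor of the Jacobian matrix $Dt_\varepsilon(U,X^1,X^2,V)$ lies in $(1-\delta,1+\delta)$ for all $(U,X^1,X^2,V)\in(-\infty,\eta]\times K\times\mathbb{R}$ and all $\varepsilon\le\varepsilon_0$. In particular, every principal minor of $Dt_\varepsilon$ is positive on $(-\infty,\eta]\times K\times\mathbb{R}$ for $\varepsilon\le\varepsilon_0$, and $\det\circ DT=[(\det Dt_\varepsilon)_\varepsilon]$ is strictly non-zero on $(-\infty,\eta]\times K\times\mathbb{R}$.
   Context: A net $(u_\varepsilon)_\varepsilon$ is strictly non-zero on a set $A$ if there exist $C>0$, $N\in\mathbb{N}$, $\varepsilon_0\in(0,1]$ with $\inf_{x\in A}|u_\varepsilon(x)|\ge C\varepsilon^N$ for all $\varepsilon\le\varepsilon_0$. Strict delta net: a net $(\delta_\varepsilon)_{\varepsilon\in(0,1]}$ of smooth compactly supported functions on $\mathbb{R}$ with $\operatorname{supp}\delta_\varepsilon\subseteq[-\varepsilon,\varepsilon]$, $\int\delta_\varepsilon\to1$ as $\varepsilon\to0$, and $\int|\delta_\varepsilon|\le C$ for some $C>0$ and small $\varepsilon$. The transformation: fix $f\in C^\infty(\mathbb{R}^2,\mathbb{R})$ and a strict delta net $(\delta_\varepsilon)_\varepsilon$; write $X=(X^1,X^2)$. Let $(x_\varepsilon)_\varepsilon=(x_\varepsilon^1,x_\varepsilon^2)_\varepsilon\in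 C^\infty(\mathbb{R}^2\times\mathbb{R},\mathbb{R}^2)^{(0,1]}$ be a fixed net such that for every compact $K\subseteq\mathbb{R}^2$ there is $\varepsilon_K$ such that for all $X\in K$ and $\varepsilon\le\varepsilon_K$, $U\mapsto x_\varepsilon(X,U)$ is the solution on all of $\mathbb{R}$ of $\partial_U^2x_\varepsilon^i(X,U)=\frac12\partial_if(x_\varepsilon(X,U))\,\delta_\varepsilon(U)$, $x_\varepsilon^i(X,-1)=X^i$, $\partial_Ux_\varepsilon^i(X,-1)=0$ ($i=1,2$) (such a net exists). Write $\dot x_\varepsilon^i=\partial_U x_\varepsilon^i$. Define $$v_\varepsilon(X,V,U)=V+\int_{-\varepsilon}^U f(x_\varepsilon(X,s))\delta_\varepsilon(s)\,ds+\int_{-\varepsilon}^U\int_{-\varepsilon}^s\sum_{i=1}^2\partial_if(x_\varepsilon(X,r))\,\dot x_\varepsilon^i(X,r)\,\delta_\varepsilon(r)\,dr\,ds,$$ and $t_\varepsilon:\mathbb{R}^4\to\mathbb{R}^4$, $t_\varepsilon(U,X^1,X^2,V)=(U,x_\varepsilon^1(X,U),x_\varepsilon^2(X,U),v_\varepsilon(X,V,U))$; $T:=[(t_\varepsilon)_\varepsilon]$, a Colombeau generalized function on $\mathbb{R}^4$ with values in $\mathbb{R}^4$. *)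

theory Defs
  imports "HOL-Analysis.Analysis"
begin

fun Ck :: "nat \<Rightarrow> ('a::euclidean_space \<Rightarrow> 'b::real_normed_vector) \<Rightarrow> bool" where
  "Ck 0 f = continuous_on UNIV f"
| "Ck (Suc k) f = ((\<forall>x. f differentiable (at x)) \<and>
      (\<forall>v. Ck k (\<lambda>x. frechet_derivative f (at x) v)))"

definition smooth :: "('a::euclidean_space \<Rightarrow> 'b::real_normed_vector) \<Rightarrow> bool" where
  "smooth f \<longleftrightarrow> (\<forall>k. Ck k f)"

definition partial :: "(real^2 \<Rightarrow> real) \<Rightarrow> 2 \<Rightarrow> real^2 \<Rightarrow> real" where
  "partial f i p = frechet_derivative f (at p) (axis i 1)"

definition oint :: "real \<Rightarrow> real \<Rightarrow> (real \<Rightarrow> real) \<Rightarrow> real" where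
  "oint a b g = (if a \<le> b then integral {a..b} g else - integral {b..a} g)"

definition strict_delta_net :: "(real \<Rightarrow> real \<Rightarrow> real) \<Rightarrow> bool" where
  "strict_delta_net \<delta> \<longleftrightarrow>
     (\<forall>\<epsilon>\<in>{0<..1}. smooth (\<delta> \<epsilon>) \<and> (\<forall>u. \<bar>u\<bar> > \<epsilon> \<longrightarrow> \<delta> \<epsilon> u = 0)) \<and>
     ((\<lambda>\<epsilon>. integral UNIV (\<delta> \<epsilon>)) \<longlongrightarrow> 1) (at_right 0) \<and>
     (\<exists>C>0. \<forall>\<^sub>F \<epsilon> in at_right 0. integral UNIV (\<lambda>u. \<bar>\<delta> \<epsilon> u\<bar>) \<le> C)"

definition xdot :: "(real \<Rightarrow> real^2 \<Rightarrow> real \<Rightarrow> real^2) \<Rightarrow> real \<Rightarrow> real^2 \<Rightarrow> real \<Rightarrow> real^2" where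
  "xdot x \<epsilon> X U = vector_derivative (\<lambda>s. x \<epsilon> X s) (at U)"

definition geodesic_net ::
  "(real^2 \<Rightarrow> real) \<Rightarrow> (real \<Rightarrow> real \<Rightarrow> real) \<Rightarrow> (real \<Rightarrow> real^2 \<Rightarrow> real \<Rightarrow> real^2) \<Rightarrow> bool" where
  "geodesic_net f \<delta> x \<longleftrightarrow>
     (\<forall>\<epsilon>\<in>{0<..1}. smooth (\<lambda>p::(real^2) \<times> real. x \<epsilon> (fst p) (snd p))) \<and>
     (\<forall>K. compact K \<longrightarrow> (\<exists>\<epsilon>K>0. \<forall>X\<in>K. \<forall>\<epsilon>\<in>{0<..1}. \<epsilon> \<le> \<epsilon>K \<longrightarrow>
        (\<forall>U. \<forall>i. ((\<lambda>s. xdot x \<epsilon> X s $ i) has_real_derivative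
                    (1/2 * partial f i (x \<epsilon> X U) * \<delta> \<epsilon> U)) (at U)) \<and>
        x \<epsilon> X (-1) = X \<and> xdot x \<epsilon> X (-1) = 0))"

definition vnet ::
  "(real^2 \<Rightarrow> real) \<Rightarrow> (real \<Rightarrow> real \<Rightarrow> real) \<Rightarrow> (real \<Rightarrow> real^2 \<Rightarrow> real \<Rightarrow> real^2)
     \<Rightarrow> real \<Rightarrow> real^2 \<Rightarrow> real \<Rightarrow> real \<Rightarrow> real" where
  "vnet f \<delta> x \<epsilon> X V U =
     V + oint (-\<epsilon>) U (\<lambda>s. f (x \<epsilon> X s) * \<delta> \<epsilon> s)
       + oint (-\<epsilon>) U (\<lambda>s. oint (-\<epsilon>) s (\<lambda>r.
            (\<Sum>i\<in>UNIV. partial f i (x \<epsilon> X r) * xdot x \<epsilon> X r $ i) * \<delta> \<epsilon> r))"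

text \<open>t_eps(U,X1,X2,V) = (U, x^1, x^2, v), coordinates of R^4 numbered 1..4.\<close>
definition tnet ::
  "(real^2 \<Rightarrow> real) \<Rightarrow> (real \<Rightarrow> real \<Rightarrow> real) \<Rightarrow> (real \<Rightarrow> real^2 \<Rightarrow> real \<Rightarrow> real^2)
     \<Rightarrow> real \<Rightarrow> real^4 \<Rightarrow> real^4" where
  "tnet f \<delta> x \<epsilon> p =
     (let U = p$1; X = (vector [p$2, p$3] :: real^2); V = p$4
      in vector [U, x \<epsilon> X U $ 1, x \<epsilon> X U $ 2, vnet f \<delta> x \<epsilon> X V U])"

text \<open>Principal minor of a square matrix for the index set S (Leibniz formula
  on S; det A = principal_minor A UNIV).\<close>
definition principal_minor :: "real^'n^'n \<Rightarrow> 'n set \<Rightarrow> real" where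
  "principal_minor A S = (\<Sum>p\<in>{p. p permutes S}. of_int (sign p) * (\<Prod>i\<in>S. A $ i $ p i))"

definition strictly_nonzero :: "(real \<Rightarrow> 'a \<Rightarrow> real) \<Rightarrow> 'a set \<Rightarrow> bool" where
  "strictly_nonzero u A \<longleftrightarrow>
     (\<exists>C>0. \<exists>N::nat. \<exists>\<epsilon>0\<in>{0<..1}. \<forall>\<epsilon>\<in>{0<..\<epsilon>0}. \<forall>y\<in>A. \<bar>u \<epsilon> y\<bar> \<ge> C * \<epsilon> ^ N)"

end

theory Submission
  imports Defs
begin

text \<open>
  Since \<open>t\<^sup>1 = U\<close> and \<open>V\<close> enters only \<open>t\<^sup>4 = v\<^sub>\<epsilon>\<close>, additively, the first row of
  \<open>A = Dt\<^sub>\<epsilon>\<close> is \<open>e\<^sub>1\<close> and its last column is \<open>e\<^sub>4\<close>; for such a bordered matrix every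
  principal minor is \<open>1\<close>, a diagonal entry of the middle \<open>2\<times>2\<close> block, or the determinant
  of that block.  The block is the derivative of the flow \<open>X \<mapsto> x\<^sub>\<epsilon>(X,U)\<close>.  This flow is the
  identity before the kick (\<open>U \<le> -\<epsilon>\<close>), and on \<open>[-\<epsilon>, \<eta>]\<close> the equation
  \<open>x'' = \<partial>f(x) \<delta>\<^sub>\<epsilon> / 2\<close> together with \<open>\<integral>|\<delta>\<^sub>\<epsilon>| \<le> C\<close> gives, by continuous induction and a
  Lipschitz estimate, \<open>|(x(Z) - x(X))(U) - (Z - X)| \<le> c |Z - X|\<close> as soon as \<open>\<eta> + \<epsilon>\<close> is small.
\<close>

lemma mvt_abs_bound:
  fixes g :: "real \<Rightarrow> real"
  assumes d: "\<And>t. a \<le> t \<Longrightarrow> t \<le> b \<Longrightarrow> (g has_real_derivative g' t) (at t)"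
    and bd: "\<And>t. a < t \<Longrightarrow> t < b \<Longrightarrow> \<bar>g' t\<bar> \<le> M" and ab: "a \<le> b"
  shows "\<bar>g b - g a\<bar> \<le> M * (b - a)"
proof (cases "a = b")
  case False
  with ab have "a < b" by simp
  from MVT2[OF this d] obtain z where z: "a < z" "z < b" "g b - g a = (b - a) * g' z" by blast
  have "\<bar>g b - g a\<bar> = (b - a) * \<bar>g' z\<bar>" using z \<open>a < b\<close> by (simp add: abs_mult)
  also have "\<dots> \<le> (b - a) * M" using bd[OF z(1,2)] \<open>a < b\<close> by (intro mult_left_mono) auto
  finally show ?thesis by (simp add: mult.commute)
qed simp

lemma constant_left_of:
  fixes g :: "real \<Rightarrow> real"
  assumes d: "\<And>t. (g has_real_derivative g' t) (at t)" and zero: "\<And>t. t < a \<Longrightarrow> g' t = 0"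
    and "s \<le> a" "r \<le> a"
  shows "g s = g r"
proof -
  have "\<bar>g (max s r) - g (min s r)\<bar> \<le> 0 * (max s r - min s r)"
    by (rule mvt_abs_bound[OF d]) (use assms in auto)
  then show ?thesis by (cases "s \<le> r") (auto simp: max_def min_def)
qed

lemma continuous_induction:
  fixes \<phi> :: "real \<Rightarrow> real"
  assumes cont: "continuous_on {a..b} \<phi>"
    and step: "\<And>t. t \<in> {a..b} \<Longrightarrow> (\<And>s. s \<in> {a..<t} \<Longrightarrow> \<phi> s < B) \<Longrightarrow> \<phi> t < B"
    and t: "t \<in> {a..b}"
  shows "\<phi> t < B"
proof (rule ccontr)
  assume "\<not> \<phi> t < B"
  define E where "E = {a..b} \<inter> \<phi> -` {B..}"
  have "t \<in> E" using t \<open>\<not> \<phi> t < B\<close> by (simp add: E_def)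
  have "closed E" unfolding E_def by (rule continuous_closed_preimage[OF cont]) auto
  have bdd: "bdd_below E" by (rule bdd_belowI[of _ a]) (auto simp: E_def)
  define t0 where "t0 = Inf E"
  have t0E: "t0 \<in> E" unfolding t0_def using closed_contains_Inf[OF _ bdd \<open>closed E\<close>] \<open>t \<in> E\<close> by blast
  have "\<phi> s < B" if "s \<in> {a..<t0}" for s
  proof (rule ccontr)
    assume "\<not> \<phi> s < B"
    then have "s \<in> E" using that t0E by (auto simp: E_def)
    then have "t0 \<le> s" unfolding t0_def by (rule cInf_lower[OF _ bdd])
    with that show False by simp
  qed
  then have "\<phi> t0 < B" using t0E by (rule_tac step) (auto simp: E_def)
  with t0E show False by (simp add: E_def)
qed

lemma norm_le_components:
  fixes v :: "real^2"
  assumes "\<And>i. \<bar>v $ i\<bar> \<le> K"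
  shows "norm v \<le> 2 * K"
proof -
  have "norm v \<le> (\<Sum>i\<in>UNIV. \<bar>v $ i\<bar>)" by (rule norm_le_l1_cart)
  also have "\<dots> \<le> of_nat (card (UNIV::2 set)) * K" by (rule sum_bounded_above) (use assms in auto)
  finally show ?thesis by simp
qed

lemma has_vector_derivative_component:
  assumes "(y has_vector_derivative v) (at s)"
  shows "((\<lambda>t. y t $ i) has_real_derivative v $ i) (at s)"
proof -
  have "(y has_derivative (\<lambda>h. h *\<^sub>R v)) (at s)" using assms by (simp add: has_vector_derivative_def)
  from bounded_linear.has_derivative[OF bounded_linear_vec_nth[of i] this]
  have "((\<lambda>t. y t $ i) has_derivative (\<lambda>h. (h *\<^sub>R v) $ i)) (at s)" .
  moreover have "(\<lambda>h. (h *\<^sub>R v) $ i) = (*) (v $ i)" by (auto simp: fun_eq_iff)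
  ultimately show ?thesis by (simp add: has_field_derivative_def)
qed

lemma exists_small_time:
  fixes a b c :: real
  assumes "0 \<le> a" "0 \<le> b" "0 < c"
  shows "\<exists>T>0. T \<le> 1 \<and> a * T \<le> c \<and> b * T \<le> 1/4"
proof (intro exI conjI)
  define T where "T = min 1 (min (c / (a + 1)) (1 / (4 * (b + 1))))"
  show "0 < T" "T \<le> 1" using assms by (simp_all add: T_def)
  have "a * T \<le> (a + 1) * (c / (a + 1))"
    using assms \<open>0 < T\<close> by (intro mult_mono) (auto simp: T_def)
  also have "\<dots> = c" using assms by simp
  finally show "a * T \<le> c" .
  have "b * T \<le> (b + 1) * (1 / (4 * (b + 1)))"
    using assms \<open>0 < T\<close> by (intro mult_mono) (auto simp: T_def)
  also have "\<dots> = 1/4" using assms by simp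
  finally show "b * T \<le> 1/4" .
qed

section \<open>Second-order equations with an integrable kick\<close>

definition kicked_solution ::
  "(2 \<Rightarrow> real^2 \<Rightarrow> real) \<Rightarrow> (real \<Rightarrow> real) \<Rightarrow> (real \<Rightarrow> real^2) \<Rightarrow> (real \<Rightarrow> real^2) \<Rightarrow> real^2 \<Rightarrow> bool"
where
  "kicked_solution P w y yd X \<longleftrightarrow>
     (\<forall>s i. ((\<lambda>t. y t $ i) has_real_derivative yd s $ i) (at s)) \<and>
     (\<forall>s i. ((\<lambda>t. yd t $ i) has_real_derivative (1/2 * P i (y s) * w s)) (at s)) \<and>
     y (-1) = X \<and> yd (-1) = 0"

locale kicked_ode =
  fixes P :: "2 \<Rightarrow> real^2 \<Rightarrow> real" and w :: "real \<Rightarrow> real" and e C :: real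
  assumes e_pos: "0 < e" and e_le: "e \<le> 1"
    and w_zero: "\<And>u. e < \<bar>u\<bar> \<Longrightarrow> w u = 0"
    and w_cont: "continuous_on UNIV w"
    and w_int: "integral UNIV (\<lambda>u. \<bar>w u\<bar>) \<le> C"
    and P_cont: "\<And>i. continuous_on UNIV (P i)"
begin

lemma abs_w_integral_le: "integral {a..b} (\<lambda>u. \<bar>w u\<bar>) \<le> C"
proof -
  have int_UNIV: "(\<lambda>u. \<bar>w u\<bar>) integrable_on UNIV"
  proof (rule integrable_on_superset)
    show "(\<lambda>u. \<bar>w u\<bar>) integrable_on {-1..1}"
      by (intro integrable_continuous_interval continuous_intros continuous_on_subset[OF w_cont]) auto
    show "\<And>x. x \<notin> {-1..1} \<Longrightarrow> \<bar>w x\<bar> = 0" using w_zero e_le by auto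
  qed auto
  have "integral {a..b} (\<lambda>u. \<bar>w u\<bar>) \<le> integral UNIV (\<lambda>u. \<bar>w u\<bar>)"
    by (rule integral_subset_le) (auto intro!: int_UNIV integrable_continuous_interval
        continuous_intros continuous_on_subset[OF w_cont])
  then show ?thesis using w_int by linarith
qed

lemma C_nonneg: "0 \<le> C"
  using abs_w_integral_le[of 0 0] by simp

lemma kick_bound:
  fixes g :: "real \<Rightarrow> real"
  assumes d: "\<And>t. (g has_real_derivative (\<phi> t * w t)) (at t)"
    and c: "continuous_on UNIV \<phi>" and ab: "a \<le> b"
    and bd: "\<And>t. t \<in> {a..b} \<Longrightarrow> \<bar>\<phi> t\<bar> \<le> M"
  shows "\<bar>g b - g a\<bar> \<le> M * C"
proof -
  have hi: "((\<lambda>t. \<phi> t * w t) has_integral (g b - g a)) {a..b}"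
    using ab by (intro fundamental_theorem_of_calculus)
      (auto simp: has_real_derivative_iff_has_vector_derivative[symmetric]
            intro!: DERIV_subset[OF d])
  have M0: "0 \<le> M" using bd[of a] ab by force
  have "\<bar>g b - g a\<bar> = norm (integral {a..b} (\<lambda>t. \<phi> t * w t))"
    using hi by (simp add: integral_unique)
  also have "\<dots> \<le> integral {a..b} (\<lambda>t. M * \<bar>w t\<bar>)"
  proof (rule integral_norm_bound_integral)
    show "(\<lambda>t. \<phi> t * w t) integrable_on {a..b}" using hi by blast
    show "(\<lambda>t. M * \<bar>w t\<bar>) integrable_on {a..b}"
      by (auto intro!: integrable_continuous_interval continuous_intros continuous_on_subset[OF w_cont])
    fix t assume "t \<in> {a..b}"
    then show "norm (\<phi> t * w t) \<le> M * \<bar>w t\<bar>"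
      using bd[of t] by (simp add: abs_mult mult_right_mono)
  qed
  also have "\<dots> = M * integral {a..b} (\<lambda>t. \<bar>w t\<bar>)" by simp
  also have "\<dots> \<le> M * C" using abs_w_integral_le M0 by (intro mult_left_mono) auto
  finally show ?thesis .
qed

lemma second_order_bound:
  fixes g gd \<phi> :: "real \<Rightarrow> real"
  assumes dg: "\<And>s. (g has_real_derivative gd s) (at s)"
    and dgd: "\<And>s. (gd has_real_derivative \<phi> s * w s) (at s)"
    and \<phi>: "continuous_on UNIV \<phi>" and gd0: "gd (-e) = 0" and t: "-e \<le> t"
    and bd: "\<And>s. s \<in> {-e..<t} \<Longrightarrow> \<bar>\<phi> s\<bar> \<le> M"
  shows "\<bar>g t - g (-e)\<bar> \<le> M * C * (t + e)"
proof -
  have "\<bar>gd r\<bar> \<le> M * C" if "-e < r" "r < t" for r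
    using kick_bound[OF dgd \<phi>, of "-e" r M] that bd gd0 by auto
  then have "\<bar>g t - g (-e)\<bar> \<le> (M * C) * (t - (-e))"
    by (intro mvt_abs_bound[OF dg]) (use t in auto)
  then show ?thesis by simp
qed

lemma kicked_solutionD:
  assumes "kicked_solution P w y yd X"
  shows "((\<lambda>t. y t $ i) has_real_derivative yd s $ i) (at s)"
    and "((\<lambda>t. yd t $ i) has_real_derivative (1/2 * P i (y s) * w s)) (at s)"
    and "y (-1) = X" and "yd (-1) = 0"
  using assms unfolding kicked_solution_def by auto

lemma kicked_solution_continuous:
  assumes "kicked_solution P w y yd X"
  shows "continuous_on UNIV y"
proof -
  have "continuous_on UNIV (\<lambda>t. \<chi> i. y t $ i)"
    by (intro continuous_on_vec_lambda continuous_at_imp_continuous_on ballI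
        DERIV_isCont[OF kicked_solutionD(1)[OF assms]])
  then show ?thesis by simp
qed

lemma kicked_solution_before:
  assumes sol: "kicked_solution P w y yd X" and s: "s \<le> -e"
  shows "yd s = 0" and "y s = X"
proof -
  have w0: "w t = 0" if "t < -e" for t using w_zero that e_pos by auto
  have yd0: "yd t = 0" if "t \<le> -e" for t
  proof -
    have "yd t $ i = yd (-1) $ i" for i
      by (rule constant_left_of[OF kicked_solutionD(2)[OF sol]]) (use w0 that e_le in auto)
    then show ?thesis using kicked_solutionD(4)[OF sol] by (simp add: vec_eq_iff)
  qed
  then show "yd s = 0" using s .
  have "y s $ i = y (-1) $ i" for i
    by (rule constant_left_of[OF kicked_solutionD(1)[OF sol]]) (use yd0 s e_le in auto)
  then show "y s = X" using kicked_solutionD(3)[OF sol] by (simp add: vec_eq_iff)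
qed

lemma kicked_solution_confined:
  assumes sol: "kicked_solution P w y yd X"
    and PG: "\<And>i p. norm (p - X) < 1/2 \<Longrightarrow> \<bar>P i p\<bar> \<le> G"
    and small: "G * C * (\<eta> + e) \<le> 1/4" and s: "s \<le> \<eta>"
  shows "norm (y s - X) < 1/2"
proof (cases "s \<le> -e")
  case True
  then show ?thesis using kicked_solution_before[OF sol] by simp
next
  case False
  have G0: "0 \<le> G" using PG[of X 1] by simp
  have yc: "continuous_on UNIV y" by (rule kicked_solution_continuous[OF sol])
  show ?thesis
  proof (rule continuous_induction[where \<phi>="\<lambda>t. norm (y t - X)" and a="-e" and b=\<eta>])
    show "continuous_on {-e..\<eta>} (\<lambda>t. norm (y t - X))"
      by (intro continuous_intros continuous_on_subset[OF yc]) auto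
    show "s \<in> {-e..\<eta>}" using False s by auto
    fix t assume t: "t \<in> {-e..\<eta>}" and below: "\<And>r. r \<in> {-e..<t} \<Longrightarrow> norm (y r - X) < 1/2"
    have "\<bar>(y t - X) $ i\<bar> \<le> 1/8" for i
    proof -
      have "\<bar>y t $ i - y (-e) $ i\<bar> \<le> (1/2 * G) * C * (t + e)"
      proof (rule second_order_bound[where g="\<lambda>s. y s $ i" and gd="\<lambda>s. yd s $ i"
            and \<phi>="\<lambda>r. 1/2 * P i (y r)"])
        show "continuous_on UNIV (\<lambda>r. 1/2 * P i (y r))"
          by (intro continuous_intros continuous_on_compose2[OF P_cont yc]) auto
        show "yd (-e) $ i = 0" using kicked_solution_before(1)[OF sol] by simp
        fix r assume "r \<in> {-e..<t}"
        then show "\<bar>1/2 * P i (y r)\<bar> \<le> 1/2 * G" using PG[OF below] by simp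
      qed (use t kicked_solutionD[OF sol] in auto)
      also have "\<dots> \<le> (G * C * (\<eta> + e)) / 2"
        using t G0 C_nonneg by (simp add: mult_left_mono)
      also have "\<dots> \<le> 1/8" using small by linarith
      finally show ?thesis using kicked_solution_before(2)[OF sol, of "-e"] by simp
    qed
    then have "norm (y t - X) \<le> 2 * (1/8)" by (rule norm_le_components)
    then show "norm (y t - X) < 1/2" by simp
  qed
qed

lemma kicked_difference_deviation:
  assumes soly: "kicked_solution P w y yd X" and solz: "kicked_solution P w z zd Y"
    and lipP: "\<And>i t. t \<in> {-e..\<eta>} \<Longrightarrow> \<bar>P i (z t) - P i (y t)\<bar> \<le> L * norm (z t - y t)"
    and L0: "0 \<le> L" and dist: "\<And>r. r \<in> {-e..\<eta>} \<Longrightarrow> norm (z r - y r) \<le> m"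
    and small: "L * C * (\<eta> + e) \<le> c" and t: "t \<in> {-e..\<eta>}"
  shows "\<bar>(z t - y t) $ k - (Y - X) $ k\<bar> \<le> c * m / 2"
proof -
  note before = kicked_solution_before[OF soly] kicked_solution_before[OF solz]
  have yc: "continuous_on UNIV y" and zc: "continuous_on UNIV z"
    using kicked_solution_continuous soly solz by blast+
  have m0: "0 \<le> m" using dist[OF t] norm_ge_zero order_trans by blast
  have "\<bar>(z t - y t) $ k - (z (-e) - y (-e)) $ k\<bar> \<le> (1/2 * L * m) * C * (t + e)"
  proof (rule second_order_bound[where g="\<lambda>s. (z s - y s) $ k" and gd="\<lambda>s. (zd s - yd s) $ k"
        and \<phi>="\<lambda>r. 1/2 * (P k (z r) - P k (y r))"])
    show "((\<lambda>s. (z s - y s) $ k) has_real_derivative (zd r - yd r) $ k) (at r)" for r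
      using DERIV_diff[OF kicked_solutionD(1)[OF solz] kicked_solutionD(1)[OF soly]] by simp
    show "((\<lambda>s. (zd s - yd s) $ k) has_real_derivative 1/2 * (P k (z r) - P k (y r)) * w r) (at r)" for r
      using DERIV_diff[OF kicked_solutionD(2)[OF solz] kicked_solutionD(2)[OF soly]]
      by (simp add: algebra_simps)
    show "continuous_on UNIV (\<lambda>r. 1/2 * (P k (z r) - P k (y r)))"
      by (intro continuous_intros continuous_on_compose2[OF P_cont yc]
          continuous_on_compose2[OF P_cont zc]) auto
    show "(zd (-e) - yd (-e)) $ k = 0" using before by simp
    fix r assume "r \<in> {-e..<t}"
    then have r: "r \<in> {-e..\<eta>}" using t by auto
    have "\<bar>P k (z r) - P k (y r)\<bar> \<le> L * norm (z r - y r)" by (rule lipP[OF r])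
    also have "\<dots> \<le> L * m" using dist[OF r] L0 by (rule mult_left_mono)
    finally show "\<bar>1/2 * (P k (z r) - P k (y r))\<bar> \<le> 1/2 * L * m" by simp
  qed (use t in auto)
  also have "\<dots> = (L * C * m) * (t + e) / 2" by simp
  also have "\<dots> \<le> (L * C * m) * (\<eta> + e) / 2"
    using t L0 m0 C_nonneg by (intro divide_right_mono mult_left_mono) auto
  also have "\<dots> = (L * C * (\<eta> + e)) * m / 2" by simp
  also have "\<dots> \<le> c * m / 2" using small m0 by (simp add: mult_right_mono)
  finally show ?thesis using before by simp
qed

text \<open>Lipschitz dependence on the initial point: with \<open>c \<le> 1/2\<close>, apply the deviation bound
  with \<open>m\<close> the maximal distance on \<open>[-e,\<eta>]\<close>; it yields \<open>m \<le> |Y - X| + c m\<close>, so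
  \<open>m \<le> 2 |Y - X|\<close> and the deviation is at most \<open>c |Y - X|\<close>.\<close>
lemma kicked_solution_lipschitz:
  assumes soly: "kicked_solution P w y yd X" and solz: "kicked_solution P w z zd Y"
    and lipP: "\<And>i t. t \<in> {-e..\<eta>} \<Longrightarrow> \<bar>P i (z t) - P i (y t)\<bar> \<le> L * norm (z t - y t)"
    and L0: "0 \<le> L" and \<eta>: "0 \<le> \<eta>" and small: "L * C * (\<eta> + e) \<le> c" and c: "c \<le> 1/2"
    and s: "s \<le> \<eta>"
  shows "\<bar>(z s - y s) $ i - (Y - X) $ i\<bar> \<le> c * norm (Y - X)"
proof -
  have c0: "0 \<le> c" using small L0 C_nonneg \<eta> e_pos
    by (meson add_nonneg_nonneg less_imp_le mult_nonneg_nonneg order_trans)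
  have yc: "continuous_on UNIV y" and zc: "continuous_on UNIV z"
    using kicked_solution_continuous soly solz by blast+
  obtain t1 where t1: "t1 \<in> {-e..\<eta>}"
    and max: "\<And>t. t \<in> {-e..\<eta>} \<Longrightarrow> norm (z t - y t) \<le> norm (z t1 - y t1)"
  proof -
    have "continuous_on {-e..\<eta>} (\<lambda>t. norm (z t - y t))"
      by (intro continuous_intros continuous_on_subset[OF yc] continuous_on_subset[OF zc]) auto
    moreover have "{-e..\<eta>} \<noteq> {}" using \<eta> e_pos by simp
    ultimately show ?thesis using continuous_attains_sup[OF compact_Icc] that by blast
  qed
  define m where "m = norm (z t1 - y t1)"
  have dev: "\<bar>(z t - y t) $ k - (Y - X) $ k\<bar> \<le> c * m / 2" if "t \<in> {-e..\<eta>}" for t k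
  proof (rule kicked_difference_deviation[OF soly solz])
    show "norm (z r - y r) \<le> m" if "r \<in> {-e..\<eta>}" for r using max[OF that] by (simp add: m_def)
  qed (use lipP L0 small that in auto)
  have "norm ((z t1 - y t1) - (Y - X)) \<le> 2 * (c * m / 2)"
    using dev[OF t1] by (intro norm_le_components) simp
  moreover have "m - norm (Y - X) \<le> norm ((z t1 - y t1) - (Y - X))"
    unfolding m_def by (rule norm_triangle_ineq2)
  moreover have "c * m \<le> 1/2 * m" using c by (rule mult_right_mono) (simp add: m_def)
  ultimately have "m \<le> 2 * norm (Y - X)" by linarith
  then have "c * m \<le> c * (2 * norm (Y - X))" using c0 by (rule mult_left_mono)
  then have bound: "c * m / 2 \<le> c * norm (Y - X)" by simp
  show ?thesis
  proof (cases "s \<le> -e")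
    case True
    then show ?thesis using kicked_solution_before[OF soly] kicked_solution_before[OF solz] c0 by simp
  next
    case False
    then show ?thesis using dev[where t=s and k=i] s bound by auto
  qed
qed

lemma kicked_solutions_close:
  assumes soly: "kicked_solution P w y yd X" and solz: "kicked_solution P w z zd Z"
    and X: "norm X \<le> R" and Z: "norm Z \<le> R"
    and PG: "\<And>i p. norm p \<le> R + 1 \<Longrightarrow> \<bar>P i p\<bar> \<le> G"
    and PL: "\<And>i p q. norm p \<le> R + 1 \<Longrightarrow> norm q \<le> R + 1 \<Longrightarrow> \<bar>P i p - P i q\<bar> \<le> L * norm (p - q)"
    and L0: "0 \<le> L" and \<eta>: "0 \<le> \<eta>" and smallG: "G * C * (\<eta> + e) \<le> 1/4"
    and smallL: "L * C * (\<eta> + e) \<le> c" and c: "c \<le> 1/2" and s: "s \<le> \<eta>"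
  shows "\<bar>(z s - y s) $ k - (Z - X) $ k\<bar> \<le> c * norm (Z - X)"
proof -
  have in_ball: "norm (v t) \<le> R + 1"
    if sol: "kicked_solution P w v vd V" and V: "norm V \<le> R" and t: "t \<le> \<eta>" for v vd V t
  proof -
    have "norm (v t - V) < 1/2"
    proof (rule kicked_solution_confined[OF sol _ smallG t])
      fix i p assume "norm (p - V) < 1/2"
      then have "norm p \<le> R + 1" using V norm_triangle_sub[of p V] by linarith
      then show "\<bar>P i p\<bar> \<le> G" by (rule PG)
    qed
    then show ?thesis using V norm_triangle_sub[of "v t" V] by linarith
  qed
  show ?thesis
  proof (rule kicked_solution_lipschitz[OF soly solz _ L0 \<eta> smallL c s])
    fix i t assume "t \<in> {-e..\<eta>}"
    then show "\<bar>P i (z t) - P i (y t)\<bar> \<le> L * norm (z t - y t)"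
      using PL in_ball[OF soly X] in_ball[OF solz Z] by simp
  qed
qed

end

section \<open>Continuously differentiable functions\<close>

abbreviation C1 :: "('a::euclidean_space \<Rightarrow> 'b::real_normed_vector) \<Rightarrow> bool" where
  "C1 \<equiv> Ck (Suc 0)"

lemma smooth_imp_Ck: "smooth g \<Longrightarrow> Ck k g"
  by (simp add: smooth_def)

lemma C1_has_derivative: "C1 g \<Longrightarrow> (g has_derivative frechet_derivative g (at x)) (at x)"
  by (simp add: frechet_derivative_works[symmetric])

lemma C1_continuous: "C1 g \<Longrightarrow> continuous_on UNIV g"
  by (auto intro!: differentiable_imp_continuous_on differentiable_at_imp_differentiable_on)

lemma C1_directional_derivative:
  "Ck (Suc (Suc 0)) g \<Longrightarrow> C1 (\<lambda>x. frechet_derivative g (at x) v)"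
  by simp

lemma C1_linear:
  assumes "bounded_linear l" shows "C1 l"
proof -
  have "frechet_derivative l (at x) = l" for x
    using frechet_derivative_at[OF bounded_linear_imp_has_derivative[OF assms]] by simp
  then show ?thesis using bounded_linear_imp_differentiable[OF assms] by simp
qed

lemma C1_const: "C1 (\<lambda>x. c)"
proof -
  have "frechet_derivative (\<lambda>x. c) (at x) = (\<lambda>v. 0)" for x
    using frechet_derivative_at[OF has_derivative_const] by simp
  then show ?thesis by simp
qed

text \<open>The chain rule, with the derivative of the composition written in coordinates
  so that its continuity is visible.\<close>
lemma C1_compose:
  fixes f :: "'b::euclidean_space \<Rightarrow> real" and y :: "'a::euclidean_space \<Rightarrow> 'b"
  assumes f: "C1 f" and y: "C1 y"
  shows "C1 (\<lambda>q. f (y q))"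
proof -
  have hd: "((\<lambda>q. f (y q)) has_derivative
      (\<lambda>v. frechet_derivative f (at (y q)) (frechet_derivative y (at q) v))) (at q)" for q
    using diff_chain_at[OF C1_has_derivative[OF y] C1_has_derivative[OF f]] by (simp add: o_def)
  have fd: "frechet_derivative (\<lambda>q. f (y q)) (at q) v =
      (\<Sum>b\<in>Basis. (frechet_derivative y (at q) v \<bullet> b) * frechet_derivative f (at (y q)) b)" for q v
  proof -
    interpret lin: bounded_linear "frechet_derivative f (at (y q))"
      using C1_has_derivative[OF f] by (rule has_derivative_bounded_linear)
    have "frechet_derivative (\<lambda>q. f (y q)) (at q) v =
        frechet_derivative f (at (y q)) (frechet_derivative y (at q) v)"
      using fun_cong[OF frechet_derivative_at[OF hd[of q]], of v] by simp
    also have "\<dots> = frechet_derivative f (at (y q))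
        (\<Sum>b\<in>Basis. (frechet_derivative y (at q) v \<bullet> b) *\<^sub>R b)"
      by (simp add: euclidean_representation)
    finally show ?thesis by (simp add: lin.sum lin.scale)
  qed
  have cf: "continuous_on UNIV (\<lambda>p. frechet_derivative f (at p) b)" for b using f by simp
  have cy: "continuous_on UNIV (\<lambda>q. frechet_derivative y (at q) v)" for v using y by simp
  show ?thesis
    using hd by (auto simp: fd differentiable_def
        intro!: continuous_intros continuous_on_compose2[OF cf C1_continuous[OF y]] cy)
qed

lemma C1_add:
  fixes f g :: "'a::euclidean_space \<Rightarrow> real"
  assumes f: "C1 f" and g: "C1 g" shows "C1 (\<lambda>x. f x + g x)"
proof -
  have hd: "((\<lambda>x. f x + g x) has_derivative
      (\<lambda>v. frechet_derivative f (at x) v + frechet_derivative g (at x) v)) (at x)" for x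
    by (intro has_derivative_add C1_has_derivative f g)
  then have "frechet_derivative (\<lambda>x. f x + g x) (at x) v =
      frechet_derivative f (at x) v + frechet_derivative g (at x) v" for x v
    using fun_cong[OF frechet_derivative_at[OF hd[of x]], of v] by simp
  then show ?thesis using hd f g by (auto simp: differentiable_def intro!: continuous_intros)
qed

lemma C1_mult:
  fixes f g :: "'a::euclidean_space \<Rightarrow> real"
  assumes f: "C1 f" and g: "C1 g" shows "C1 (\<lambda>x. f x * g x)"
proof -
  have hd: "((\<lambda>x. f x * g x) has_derivative
      (\<lambda>v. f x * frechet_derivative g (at x) v + frechet_derivative f (at x) v * g x)) (at x)" for x
    by (intro has_derivative_mult C1_has_derivative f g)
  then have "frechet_derivative (\<lambda>x. f x * g x) (at x) v =
      f x * frechet_derivative g (at x) v + frechet_derivative f (at x) v * g x" for x v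
    using fun_cong[OF frechet_derivative_at[OF hd[of x]], of v] by simp
  then show ?thesis using hd f g C1_continuous[OF f] C1_continuous[OF g]
    by (auto simp: differentiable_def intro!: continuous_intros)
qed

lemma C1_sum:
  fixes F :: "'i \<Rightarrow> 'a::euclidean_space \<Rightarrow> real"
  assumes "finite I" "\<And>i. i \<in> I \<Longrightarrow> C1 (F i)" shows "C1 (\<lambda>x. \<Sum>i\<in>I. F i x)"
  using assms
proof (induction I rule: finite_induct)
  case empty then show ?case using C1_const[of 0] by simp
next
  case (insert a I)
  then have "C1 (\<lambda>x. F a x + (\<Sum>i\<in>I. F i x))" by (intro C1_add) auto
  then show ?case using insert by simp
qed

lemma C1_component:
  fixes y :: "'a::euclidean_space \<Rightarrow> real^'n"
  assumes "C1 y" shows "C1 (\<lambda>q. y q $ i)"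
  using C1_compose[OF C1_linear[OF bounded_linear_vec_nth] assms] .

lemma partial_C1: "smooth f \<Longrightarrow> C1 (partial f i)"
  using C1_directional_derivative[OF smooth_imp_Ck, of f "axis i 1"]
  by (simp add: partial_def[abs_def])

lemma continuous_bounded_on_ball:
  fixes g :: "'a::euclidean_space \<Rightarrow> real"
  assumes "continuous_on UNIV g"
  shows "\<exists>G. \<forall>p. norm p \<le> r \<longrightarrow> \<bar>g p\<bar> \<le> G"
proof -
  have "compact (g ` cball 0 r)"
    by (rule compact_continuous_image[OF continuous_on_subset[OF assms]]) auto
  then obtain G where "\<forall>y\<in>g ` cball 0 r. norm y \<le> G"
    using compact_imp_bounded bounded_iff by metis
  then show ?thesis by (intro exI[of _ G]) (auto simp: mem_cball_0)
qed

lemma C1_lipschitz_on_ball: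
  fixes g :: "'a::euclidean_space \<Rightarrow> real"
  assumes g: "C1 g"
  shows "\<exists>L\<ge>0. \<forall>p q. norm p \<le> r \<longrightarrow> norm q \<le> r \<longrightarrow> \<bar>g p - g q\<bar> \<le> L * norm (p - q)"
proof -
  have "continuous_on UNIV (\<lambda>p. \<Sum>b\<in>Basis. \<bar>frechet_derivative g (at p) b\<bar>)"
    using g by (auto intro!: continuous_intros)
  then obtain M where M: "\<And>p. norm p \<le> r \<Longrightarrow> \<bar>\<Sum>b\<in>Basis. \<bar>frechet_derivative g (at p) b\<bar>\<bar> \<le> M"
    using continuous_bounded_on_ball by blast
  define L where "L = max M 0"
  have "\<bar>g p - g q\<bar> \<le> L * norm (p - q)" if p: "norm p \<le> r" and q: "norm q \<le> r" for p q
  proof -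
    have "norm (g p - g q) \<le> L * norm (p - q)"
    proof (rule differentiable_bound[where f'="\<lambda>p. frechet_derivative g (at p)" and S="cball 0 r"])
      fix y :: 'a assume y: "y \<in> cball 0 r"
      show "(g has_derivative frechet_derivative g (at y)) (at y within cball 0 r)"
        using C1_has_derivative[OF g] by (rule has_derivative_at_withinI)
      have bl: "bounded_linear (frechet_derivative g (at y))"
        using C1_has_derivative[OF g] by (rule has_derivative_bounded_linear)
      have "onorm (frechet_derivative g (at y)) \<le> (\<Sum>b\<in>Basis. norm (frechet_derivative g (at y) b))"
        by (rule onorm_componentwise[OF bl])
      also have "\<dots> \<le> M" using M[of y] y by (simp add: mem_cball_0)
      also have "\<dots> \<le> L" by (simp add: L_def)
      finally show "onorm (frechet_derivative g (at y)) \<le> L" .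
    qed (use p q in \<open>auto simp: mem_cball_0\<close>)
    then show ?thesis by simp
  qed
  moreover have "L \<ge> 0" by (simp add: L_def)
  ultimately show ?thesis by blast
qed

section \<open>Oriented integrals\<close>

lemma oint_has_derivative:
  assumes h: "continuous_on UNIV h"
  shows "((\<lambda>U. oint a U h) has_real_derivative h U0) (at U0)"
proof -
  define c where "c = min a U0 - 1"
  define b where "b = max a U0 + 1"
  have int: "h integrable_on {p..q}" for p q
    by (rule integrable_continuous_interval) (rule continuous_on_subset[OF h], simp)
  have eq: "oint a U h = integral {c..U} h - integral {c..a} h" if "U \<in> {c<..<b}" for U
  proof (cases "a \<le> U")
    case True
    have "integral {c..a} h + integral {a..U} h = integral {c..U} h"
      using True c_def by (intro Henstock_Kurzweil_Integration.integral_combine int) auto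
    then show ?thesis using True by (simp add: oint_def)
  next
    case False
    have "integral {c..U} h + integral {U..a} h = integral {c..a} h"
      using False that c_def by (intro Henstock_Kurzweil_Integration.integral_combine int) auto
    then show ?thesis using False by (simp add: oint_def)
  qed
  have "((\<lambda>u. integral {c..u} h) has_vector_derivative h U0) (at U0 within {c..b})"
    by (rule integral_has_vector_derivative) (auto intro: continuous_on_subset[OF h] simp: c_def b_def)
  then have "((\<lambda>u. integral {c..u} h) has_vector_derivative h U0) (at U0 within {c<..<b})"
    by (rule has_vector_derivative_within_subset) auto
  then have "((\<lambda>u. integral {c..u} h) has_vector_derivative h U0) (at U0)"
    by (subst (asm) at_within_open) (auto simp: c_def b_def)
  then have "((\<lambda>u. integral {c..u} h - integral {c..a} h) has_real_derivative h U0) (at U0)"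
    by (auto simp: has_real_derivative_iff_has_vector_derivative[symmetric] intro!: derivative_eq_intros)
  then show ?thesis
    by (rule has_field_derivative_transform_within_open[where S="{c<..<b}"]) (auto simp: eq c_def b_def)
qed

lemma oint_continuous: "continuous_on UNIV k \<Longrightarrow> continuous_on UNIV (\<lambda>s. oint a s k)"
  by (rule continuous_at_imp_continuous_on) (auto intro!: DERIV_isCont oint_has_derivative)

text \<open>Integration by parts turns the iterated integral in \<open>v\<^sub>\<epsilon>\<close> into single integrals.\<close>
lemma oint_iterated:
  assumes k: "continuous_on UNIV k"
  shows "oint a U (\<lambda>s. oint a s k) = U * oint a U k - oint a U (\<lambda>r. r * k r)"
proof -
  define D where "D U = oint a U (\<lambda>s. oint a s k) - (U * oint a U k - oint a U (\<lambda>r. r * k r))" for U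
  have kc: "continuous_on UNIV (\<lambda>r. r * k r)" by (intro continuous_intros k)
  have dD: "(D has_real_derivative 0) (at t)" for t
  proof -
    have "(D has_real_derivative (oint a t k - ((1 * oint a t k + k t * t) - t * k t))) (at t)"
      unfolding D_def
      by (intro DERIV_diff DERIV_mult[OF DERIV_ident oint_has_derivative[OF k]]
          oint_has_derivative oint_continuous k kc)
    then show ?thesis by simp
  qed
  have "D U = D a" by (rule constant_left_of[OF dD, of "max U a"]) auto
  then show ?thesis by (simp add: D_def oint_def)
qed

lemma oint_differentiable_in_parameter:
  fixes g :: "'a::euclidean_space \<times> real \<Rightarrow> real"
  assumes g: "C1 g"
  shows "\<exists>D. ((\<lambda>X. oint a U (\<lambda>s. g (X, s))) has_derivative D) (at X0)"
proof -
  define gX where "gX X t = Blinfun (\<lambda>v. frechet_derivative g (at (X, t)) (v, 0))" for X t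
  have blin: "bounded_linear (\<lambda>v::'a. frechet_derivative g (at q) (v, 0))" for q
  proof -
    have "bounded_linear (frechet_derivative g (at q))"
      using C1_has_derivative[OF g] by (rule has_derivative_bounded_linear)
    then show ?thesis
      by (rule bounded_linear_compose) (auto intro: bounded_linear_Pair bounded_linear_ident bounded_linear_zero)
  qed
  have gX_deriv: "((\<lambda>X. g (X, t)) has_derivative blinfun_apply (gX X t)) (at X within UNIV)" for X t
  proof -
    have "((\<lambda>X. (X, t)) has_derivative (\<lambda>v. (v, 0))) (at X)"
      by (auto intro!: derivative_eq_intros)
    from diff_chain_at[OF this C1_has_derivative[OF g]]
    show ?thesis by (simp add: gX_def bounded_linear_Blinfun_apply[OF blin] o_def)
  qed
  have gX_cont: "continuous_on (UNIV \<times> S) (\<lambda>(X, t). gX X t)" for S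
  proof (rule continuous_on_blinfun_componentwise)
    fix i :: 'a
    have "continuous_on UNIV (\<lambda>q. frechet_derivative g (at q) (i, 0))" using g by simp
    then have "continuous_on (UNIV \<times> S) (\<lambda>q. frechet_derivative g (at q) (i, 0))"
      by (rule continuous_on_subset) auto
    then show "continuous_on (UNIV \<times> S) (\<lambda>x. blinfun_apply (case x of (X, t) \<Rightarrow> gX X t) i)"
      by (simp add: gX_def bounded_linear_Blinfun_apply[OF blin] split_beta')
  qed
  have intg: "(\<lambda>s. g (X, s)) integrable_on cbox p q" for X p q
    by (simp only: cbox_interval, rule integrable_continuous_interval)
      (auto intro!: continuous_on_compose2[OF C1_continuous[OF g]] continuous_intros)
  show ?thesis
  proof (cases "a \<le> U")
    case True
    have "((\<lambda>X. integral (cbox a U) (\<lambda>s. g (X, s))) has_derivative integral (cbox a U) (gX X0))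
        (at X0 within UNIV)"
      by (rule leibniz_rule[OF gX_deriv intg gX_cont]) auto
    moreover have "oint a U (\<lambda>s. g (X, s)) = integral (cbox a U) (\<lambda>s. g (X, s))" for X
      using True by (simp add: oint_def cbox_interval)
    ultimately show ?thesis by auto
  next
    case False
    have "((\<lambda>X. integral (cbox U a) (\<lambda>s. g (X, s))) has_derivative integral (cbox U a) (gX X0))
        (at X0 within UNIV)"
      by (rule leibniz_rule[OF gX_deriv intg gX_cont]) auto
    then have "((\<lambda>X. - integral (cbox U a) (\<lambda>s. g (X, s))) has_derivative
        (\<lambda>v. - integral (cbox U a) (gX X0) v)) (at X0)"
      by (intro has_derivative_minus) auto
    moreover have "oint a U (\<lambda>s. g (X, s)) = - integral (cbox U a) (\<lambda>s. g (X, s))" for X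
      using False by (simp add: oint_def cbox_interval)
    ultimately show ?thesis by auto
  qed
qed

text \<open>Jointly, \<open>(X, U) \<mapsto> \<integral>\<^sub>a\<^sup>U g(X, s) ds\<close> is differentiable: its partial derivatives exist
  and the one in \<open>U\<close>, namely \<open>g(X, U)\<close>, is continuous.\<close>
lemma parametric_oint_differentiable:
  fixes g :: "'a::euclidean_space \<times> real \<Rightarrow> real"
  assumes g: "C1 g"
  shows "(\<lambda>q. oint a (snd q) (\<lambda>s. g (fst q, s))) differentiable (at q0)"
proof -
  obtain X0 U0 where q0: "q0 = (X0, U0)" by fastforce
  define F where "F X U = oint a U (\<lambda>s. g (X, s))" for X U
  obtain D where D: "((\<lambda>X. F X U0) has_derivative D) (at X0 within UNIV)"
    using oint_differentiable_in_parameter[OF g] unfolding F_def by blast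
  have gc: "continuous_on UNIV g" by (rule C1_continuous[OF g])
  have gU_deriv: "((\<lambda>U. F X U) has_derivative blinfun_apply (blinfun_scaleR_left (g (X, U))))
      (at U within UNIV)" for X U
  proof -
    have "((\<lambda>U. F X U) has_real_derivative g (X, U)) (at U)"
      unfolding F_def
      by (rule oint_has_derivative) (auto intro!: continuous_on_compose2[OF gc] continuous_intros)
    then have "((\<lambda>U. F X U) has_derivative (\<lambda>t. g (X, U) * t)) (at U)"
      by (rule has_field_derivative_imp_has_derivative)
    moreover have "blinfun_apply (blinfun_scaleR_left (g (X, U))) = (\<lambda>t. g (X, U) * t)"
      by (auto simp: blinfun_scaleR_left.rep_eq)
    ultimately show ?thesis by simp
  qed
  have gU_cont: "continuous (at (X0, U0) within UNIV \<times> UNIV) (\<lambda>(X, U). blinfun_scaleR_left (g (X, U)))"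
  proof -
    have "continuous (at (X0, U0)) g" using gc by (simp add: continuous_on_eq_continuous_at)
    then have "continuous (at (X0, U0)) (\<lambda>q. blinfun_scaleR_left (g q))"
      by (rule bounded_linear.continuous[OF bounded_linear_blinfun_scaleR_left])
    then show ?thesis by (simp add: split_beta')
  qed
  have "((\<lambda>(X, U). F X U) has_derivative (\<lambda>(tx, ty). D tx + blinfun_scaleR_left (g (X0, U0)) ty))
      (at (X0, U0) within UNIV \<times> UNIV)"
    by (rule has_derivative_partialsI[OF D gU_deriv gU_cont]) auto
  then show ?thesis by (auto simp: differentiable_def q0 F_def split_beta')
qed

lemma vector_4:
  "(vector [a,b,c,d] :: ('a::zero)^4) $ 1 = a"
  "(vector [a,b,c,d] :: ('a::zero)^4) $ 2 = b"
  "(vector [a,b,c,d] :: ('a::zero)^4) $ 3 = c"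
  "(vector [a,b,c,d] :: ('a::zero)^4) $ 4 = d"
  unfolding vector_def by simp_all

lemma tnet_components:
  "tnet f \<delta> x \<epsilon> p $ 1 = p $ 1"
  "tnet f \<delta> x \<epsilon> p $ 2 = x \<epsilon> (vector [p$2, p$3]) (p$1) $ 1"
  "tnet f \<delta> x \<epsilon> p $ 3 = x \<epsilon> (vector [p$2, p$3]) (p$1) $ 2"
  "tnet f \<delta> x \<epsilon> p $ 4 = vnet f \<delta> x \<epsilon> (vector [p$2, p$3]) (p$4) (p$1)"
  by (simp_all add: tnet_def Let_def vector_4)

lemma differentiable_by_components:
  fixes F :: "'a::real_normed_vector \<Rightarrow> real^'n"
  assumes "\<And>i. (\<lambda>p. F p $ i) differentiable (at a)"
  shows "F differentiable (at a)"
  unfolding differentiable_componentwise_within[of F]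
  by (auto simp: Basis_vec_def cart_eq_inner_axis[symmetric] assms)

definition base_point :: "real^4 \<Rightarrow> (real^2) \<times> real" where
  "base_point p = (vector [p$2, p$3], p$1)"

lemma base_point_differentiable: "base_point differentiable (at p)"
proof -
  have "linear (\<lambda>p::real^4. (vector [p$2, p$3] :: real^2))"
    by (rule linearI) (auto simp: vec_eq_iff forall_2)
  then have "bounded_linear (\<lambda>p::real^4. (vector [p$2, p$3] :: real^2))"
    by (simp add: linear_conv_bounded_linear)
  then have "bounded_linear base_point"
    unfolding base_point_def by (intro bounded_linear_Pair bounded_linear_vec_nth)
  then show ?thesis by (rule bounded_linear_imp_differentiable)
qed

lemma C1_at_base_point_differentiable:
  fixes g :: "(real^2) \<times> real \<Rightarrow> real" and p :: "real^4"
  assumes "C1 g"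
  shows "(\<lambda>p. g (vector [p$2, p$3], p$1)) differentiable (at p)"
proof -
  have "(g \<circ> base_point) differentiable (at p)"
    by (rule differentiable_chain_at[OF base_point_differentiable differentiableI[OF C1_has_derivative[OF assms]]])
  then show ?thesis by (simp add: o_def base_point_def)
qed

lemma oint_at_base_point_differentiable:
  fixes g :: "(real^2) \<times> real \<Rightarrow> real" and p :: "real^4"
  assumes "C1 g"
  shows "(\<lambda>p. oint a (p$1) (\<lambda>s. g (vector [p$2, p$3], s))) differentiable (at p)"
proof -
  have "((\<lambda>q. oint a (snd q) (\<lambda>s. g (fst q, s))) \<circ> base_point) differentiable (at p)"
    by (rule differentiable_chain_at[OF base_point_differentiable parametric_oint_differentiable[OF assms]])
  then show ?thesis by (simp add: o_def base_point_def)
qed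

lemma xdot_partial_derivative:
  fixes x :: "real \<Rightarrow> real^2 \<Rightarrow> real \<Rightarrow> real^2"
  assumes "smooth (\<lambda>q. x \<epsilon> (fst q) (snd q))"
  shows "((\<lambda>s. x \<epsilon> X s) has_vector_derivative xdot x \<epsilon> X r) (at r)"
    and "xdot x \<epsilon> X r = frechet_derivative (\<lambda>q. x \<epsilon> (fst q) (snd q)) (at (X, r)) (0, 1)"
proof -
  define xj where "xj = (\<lambda>q. x \<epsilon> (fst q) (snd q))"
  let ?D = "frechet_derivative xj (at (X, r))"
  have C: "C1 xj" using smooth_imp_Ck[OF assms] by (simp add: xj_def)
  have "((\<lambda>s. (X, s)) has_derivative (\<lambda>h. (0, h))) (at r)" by (auto intro!: derivative_eq_intros)
  from diff_chain_at[OF this C1_has_derivative[OF C]]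
  have "((\<lambda>s. x \<epsilon> X s) has_derivative (\<lambda>h. ?D (0, h))) (at r)" by (simp add: o_def xj_def)
  moreover have "(\<lambda>h. ?D (0, h)) = (\<lambda>h. h *\<^sub>R ?D (0, 1))"
  proof
    fix h :: real
    interpret bounded_linear ?D
      using C1_has_derivative[OF C] by (rule has_derivative_bounded_linear)
    have "?D (0, h) = ?D (h *\<^sub>R (0, 1))" by simp
    also have "\<dots> = h *\<^sub>R ?D (0, 1)" by (rule scale)
    finally show "?D (0, h) = h *\<^sub>R ?D (0, 1)" .
  qed
  ultimately have vd: "((\<lambda>s. x \<epsilon> X s) has_vector_derivative ?D (0, 1)) (at r)"
    unfolding has_vector_derivative_def by simp
  moreover have "xdot x \<epsilon> X r = ?D (0, 1)" unfolding xdot_def using vd by (rule vector_derivative_at)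
  ultimately show "((\<lambda>s. x \<epsilon> X s) has_vector_derivative xdot x \<epsilon> X r) (at r)"
    and "xdot x \<epsilon> X r = frechet_derivative (\<lambda>q. x \<epsilon> (fst q) (snd q)) (at (X, r)) (0, 1)"
    by (simp_all add: xj_def)
qed

text \<open>\<open>t\<^sub>\<epsilon>\<close> is differentiable: its last component is a combination of parametric integrals
  of \<open>C\<^sup>1\<close> integrands once the iterated integral is removed by \<open>oint_iterated\<close>.\<close>
lemma tnet_differentiable:
  assumes f: "smooth f" and \<delta>: "smooth (\<delta> \<epsilon>)" and xs: "smooth (\<lambda>q. x \<epsilon> (fst q) (snd q))"
  shows "tnet f \<delta> x \<epsilon> differentiable (at p)"
proof -
  define xj where "xj = (\<lambda>q. x \<epsilon> (fst q) (snd q))"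
  have Cx: "C1 xj" using smooth_imp_Ck[OF xs] by (simp add: xj_def)
  have Cd: "C1 (\<lambda>q::(real^2)\<times>real. \<delta> \<epsilon> (snd q))"
    by (rule C1_compose[OF smooth_imp_Ck[OF \<delta>] C1_linear[OF bounded_linear_snd]])
  define g where "g q = f (xj q) * \<delta> \<epsilon> (snd q)" for q
  define h where "h q = (\<Sum>i\<in>UNIV. partial f i (xj q) * frechet_derivative xj (at q) (0, 1) $ i)
      * \<delta> \<epsilon> (snd q)" for q
  have Cg: "C1 g" unfolding g_def by (intro C1_mult C1_compose[OF smooth_imp_Ck[OF f] Cx] Cd)
  have "C1 (\<lambda>q. partial f i (xj q))" for i
    unfolding partial_def
    by (rule C1_compose[OF C1_directional_derivative[OF smooth_imp_Ck[OF f]] Cx])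
  moreover have "C1 (\<lambda>q. frechet_derivative xj (at q) (0, 1) $ i)" for i
    using smooth_imp_Ck[OF xs] by (intro C1_component C1_directional_derivative) (simp add: xj_def)
  ultimately have Ch: "C1 h" unfolding h_def by (intro C1_mult C1_sum Cd) auto
  have Crh: "C1 (\<lambda>q. snd q * h q)" by (intro C1_mult Ch C1_linear[OF bounded_linear_snd])
  have vnet_eq: "vnet f \<delta> x \<epsilon> X V U = V + oint (-\<epsilon>) U (\<lambda>s. g (X, s))
      + U * oint (-\<epsilon>) U (\<lambda>s. h (X, s)) - oint (-\<epsilon>) U (\<lambda>s. s * h (X, s))" for X V U
  proof -
    have "continuous_on UNIV (\<lambda>s. h (X, s))"
      by (rule continuous_on_compose2[OF C1_continuous[OF Ch]]) (auto intro!: continuous_intros)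
    moreover have "(\<lambda>r. (\<Sum>i\<in>UNIV. partial f i (x \<epsilon> X r) * xdot x \<epsilon> X r $ i) * \<delta> \<epsilon> r) =
        (\<lambda>r. h (X, r))"
      using xdot_partial_derivative(2)[where x=x and \<epsilon>=\<epsilon>, OF xs] by (simp add: h_def xj_def)
    ultimately show ?thesis unfolding vnet_def by (simp add: oint_iterated g_def xj_def)
  qed
  show ?thesis
  proof (rule differentiable_by_components)
    fix k :: 4
    have coord: "(\<lambda>p::real^4. p $ j) differentiable (at p)" for j
      by (rule bounded_linear_imp_differentiable[OF bounded_linear_vec_nth])
    have pos: "(\<lambda>p::real^4. x \<epsilon> (vector [p$2, p$3]) (p$1) $ i) differentiable (at p)" for i
      using C1_at_base_point_differentiable[OF C1_component[OF Cx]] by (simp add: xj_def)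
    have I1: "(\<lambda>p::real^4. oint (-\<epsilon>) (p$1) (\<lambda>s. g (vector [p$2, p$3], s))) differentiable (at p)"
      by (rule oint_at_base_point_differentiable[OF Cg])
    have I2: "(\<lambda>p::real^4. oint (-\<epsilon>) (p$1) (\<lambda>s. h (vector [p$2, p$3], s))) differentiable (at p)"
      by (rule oint_at_base_point_differentiable[OF Ch])
    have I3: "(\<lambda>p::real^4. oint (-\<epsilon>) (p$1) (\<lambda>s. s * h (vector [p$2, p$3], s))) differentiable (at p)"
      using oint_at_base_point_differentiable[OF Crh] by simp
    have "(\<lambda>p::real^4. p$4 + oint (-\<epsilon>) (p$1) (\<lambda>s. g (vector [p$2, p$3], s))
        + p$1 * oint (-\<epsilon>) (p$1) (\<lambda>s. h (vector [p$2, p$3], s))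
        - oint (-\<epsilon>) (p$1) (\<lambda>s. s * h (vector [p$2, p$3], s))) differentiable (at p)"
      by (rule differentiable_diff[OF differentiable_add[OF differentiable_add[OF coord I1]
            differentiable_mult[OF coord I2]] I3])
    then have vel: "(\<lambda>p::real^4. vnet f \<delta> x \<epsilon> (vector [p$2, p$3]) (p$4) (p$1)) differentiable (at p)"
      by (simp add: vnet_eq)
    show "(\<lambda>p. tnet f \<delta> x \<epsilon> p $ k) differentiable (at p)"
      using exhaust_4[of k] coord pos vel by (auto simp: tnet_components)
  qed
qed

lemma jacobian_entry_bound:
  fixes F :: "real^'n \<Rightarrow> real^'m"
  assumes dF: "F differentiable (at p)" and r: "0 < r"
    and bd: "\<And>h. \<bar>h\<bar> < r \<Longrightarrow> \<bar>F (p + h *\<^sub>R axis j 1) $ i - F p $ i - h * a\<bar> \<le> c * \<bar>h\<bar>"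
  shows "\<bar>jacobian F (at p) $ i $ j - a\<bar> \<le> c"
proof -
  define F' where "F' = frechet_derivative F (at p)"
  define e :: "real^'n" where "e = axis j 1"
  have hF: "(F has_derivative F') (at p)"
    using dF by (simp add: F'_def frechet_derivative_works[symmetric])
  interpret F': bounded_linear F' using hF by (rule has_derivative_bounded_linear)
  have "((\<lambda>h::real. p + h *\<^sub>R e) has_derivative (\<lambda>h. h *\<^sub>R e)) (at 0)"
    by (auto intro!: derivative_eq_intros)
  from diff_chain_at[OF this, of F F'] hF
  have "((\<lambda>h. F (p + h *\<^sub>R e)) has_derivative (\<lambda>h. F' (h *\<^sub>R e))) (at 0)" by (simp add: o_def)
  from bounded_linear.has_derivative[OF bounded_linear_vec_nth[of i] this]
  have "((\<lambda>h. F (p + h *\<^sub>R e) $ i) has_derivative (\<lambda>h. F' (h *\<^sub>R e) $ i)) (at 0)" .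
  moreover have "(\<lambda>h. F' (h *\<^sub>R e) $ i) = (*) (F' e $ i)"
    by (auto simp: F'.scale)
  ultimately have "((\<lambda>h. F (p + h *\<^sub>R e) $ i) has_real_derivative F' e $ i) (at 0)"
    by (simp add: has_field_derivative_def)
  then have lim: "((\<lambda>h. \<bar>(F (p + h *\<^sub>R e) $ i - F p $ i) / h - a\<bar>) \<longlongrightarrow> \<bar>F' e $ i - a\<bar>) (at 0)"
    unfolding DERIV_def by (auto intro!: tendsto_intros)
  have "\<forall>\<^sub>F h in at (0::real). h \<noteq> 0 \<and> dist h 0 < r"
    using r eventually_at by blast
  then have "\<forall>\<^sub>F h in at 0. \<bar>(F (p + h *\<^sub>R e) $ i - F p $ i) / h - a\<bar> \<le> c"
  proof (rule eventually_mono)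
    fix h :: real assume "h \<noteq> 0 \<and> dist h 0 < r"
    then have h: "h \<noteq> 0 \<and> \<bar>h\<bar> < r" by simp
    have "\<bar>(F (p + h *\<^sub>R e) $ i - F p $ i) / h - a\<bar> = \<bar>F (p + h *\<^sub>R e) $ i - F p $ i - h * a\<bar> / \<bar>h\<bar>"
      using h by (simp add: field_simps flip: abs_divide)
    also have "\<dots> \<le> c" using bd[of h] h by (simp add: e_def divide_le_eq)
    finally show "\<bar>(F (p + h *\<^sub>R e) $ i - F p $ i) / h - a\<bar> \<le> c" .
  qed
  then have "\<bar>F' e $ i - a\<bar> \<le> c" by (rule tendsto_upperbound[OF lim]) simp
  then show ?thesis by (simp add: jacobian_def matrix_def F'_def e_def)
qed

section \<open>Principal minors of bordered matrices\<close>

text \<open>The shape of \<open>Dt\<^sub>\<epsilon>\<close>: the first row is \<open>e\<^sub>1\<close> (since \<open>t\<^sup>1 = U\<close>) and the last column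
  is \<open>e\<^sub>4\<close> (since only \<open>t\<^sup>4 = v\<^sub>\<epsilon>\<close> depends on \<open>V\<close>, with slope 1).\<close>
definition bordered :: "real^4^4 \<Rightarrow> bool" where
  "bordered A \<longleftrightarrow> (\<forall>j. A$1$j = (if j = 1 then 1 else 0)) \<and> (\<forall>i. A$i$4 = (if i = 4 then 1 else 0))"

lemma bordered_permutation:
  fixes A :: "real^4^4"
  assumes A: "bordered A" and p: "p permutes S" and nz: "\<And>i. i \<in> S \<Longrightarrow> A$i$(p i) \<noteq> 0"
  shows "p = id \<or> (p = Transposition.transpose 2 3 \<and> {2, 3} \<subseteq> S)"
proof -
  have ne: "p a \<noteq> p b" if "a \<noteq> b" for a b using permutes_inj[OF p] that by (auto dest: injD)
  have fix_out: "i \<notin> S \<Longrightarrow> p i = i" for i using p by (rule permutes_not_in)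
  have p1: "p 1 = 1"
    using A nz[of 1] fix_out[of 1] by (cases "1 \<in> S") (auto simp: bordered_def split: if_splits)
  have p4: "p 4 = 4"
  proof -
    obtain j where j: "p j = 4" using permutes_surj[OF p] by (metis surjD)
    have "j = 4"
    proof (cases "j \<in> S")
      case True
      then show ?thesis using nz[OF True] j A by (auto simp: bordered_def split: if_splits)
    qed (use fix_out j in auto)
    with j show ?thesis by simp
  qed
  have p23: "p 2 \<in> {2, 3}" "p 3 \<in> {2, 3}" "p 2 \<noteq> p 3"
    using ne[of 2 1] ne[of 2 4] ne[of 3 1] ne[of 3 4] ne[of 2 3] exhaust_4[of "p 2"] exhaust_4[of "p 3"]
    by (auto simp: p1 p4)
  show ?thesis
  proof (cases "p 2 = 2")
    case True
    then have "p = id" using p1 p4 p23 by (auto simp: fun_eq_iff forall_4)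
    then show ?thesis by simp
  next
    case False
    then have "p 2 = 3" "p 3 = 2" using p23 by auto
    moreover from this have "{2, 3} \<subseteq> S" using fix_out by force
    ultimately show ?thesis using p1 p4 by (auto simp: fun_eq_iff forall_4 transpose_def)
  qed
qed

lemma principal_minor_bordered:
  fixes A :: "real^4^4"
  assumes A: "bordered A"
  shows "principal_minor A S =
    (\<Prod>i\<in>S \<inter> {2, 3}. A$i$i) - (if {2, 3} \<subseteq> S then A$2$3 * A$3$2 else 0)"
proof -
  define T where "T = Transposition.transpose (2::4) 3"
  define contrib where "contrib p = of_int (sign p) * (\<Prod>i\<in>S. A$i$(p i))" for p
  define Q where "Q = (if {2, 3} \<subseteq> S then {id, T} else {id})"
  have Q: "Q \<subseteq> {p. p permutes S}"
    by (auto simp: Q_def T_def permutes_id permutes_swap_id)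
  have zero: "contrib p = 0" if "p \<in> {p. p permutes S} - Q" for p
  proof (rule ccontr)
    assume "contrib p \<noteq> 0"
    then have "\<And>i. i \<in> S \<Longrightarrow> A$i$(p i) \<noteq> 0" by (auto simp: contrib_def)
    moreover have "p permutes S" using that by simp
    ultimately have "p = id \<or> (p = T \<and> {2, 3} \<subseteq> S)"
      using bordered_permutation[OF A] unfolding T_def by blast
    then show False using that by (auto simp: Q_def split: if_splits)
  qed
  then have minor: "principal_minor A S = sum contrib Q"
    unfolding principal_minor_def contrib_def[symmetric]
    using sum.mono_neutral_right[OF finite_permutations[OF finite] Q, of contrib] zero by blast
  have diag: "A$i$i = 1" if "i \<notin> {2, 3}" for i
    using A that exhaust_4[of i] by (auto simp: bordered_def)
  have id_contrib: "contrib id = (\<Prod>i\<in>S \<inter> {2, 3}. A$i$i)"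
  proof -
    have "(\<Prod>i\<in>S - {2, 3}. A$i$i) = 1" by (rule prod.neutral) (simp add: diag)
    then show ?thesis by (simp add: contrib_def sign_id prod.Int_Diff[of S _ "{2, 3}"])
  qed
  show ?thesis
  proof (cases "{2, 3} \<subseteq> S")
    case True
    have T23: "T 2 = 3" "T 3 = 2" and T_fix: "\<And>i. i \<notin> {2, 3} \<Longrightarrow> T i = i"
      by (auto simp: T_def transpose_def)
    have "(\<Prod>i\<in>S. A$i$(T i)) = (\<Prod>i\<in>S \<inter> {2, 3}. A$i$(T i)) * (\<Prod>i\<in>S - {2, 3}. A$i$(T i))"
      by (rule prod.Int_Diff) simp
    also have "S \<inter> {2, 3} = {2, 3}" using True by auto
    also have "(\<Prod>i\<in>{2, 3}. A$i$(T i)) = A$2$3 * A$3$2" by (simp add: T23)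
    also have "(\<Prod>i\<in>S - {2, 3}. A$i$(T i)) = 1" by (rule prod.neutral) (simp add: T_fix diag)
    finally have "contrib T = - (A$2$3 * A$3$2)" by (simp add: contrib_def T_def sign_swap_id)
    moreover have "T \<noteq> id"
    proof
      assume "T = id"
      with T23(1) show False by simp
    qed
    ultimately show ?thesis using True by (simp add: minor Q_def id_contrib)
  next
    case False
    then have "Q = {id}" by (auto simp: Q_def)
    with False show ?thesis by (auto simp: minor id_contrib)
  qed
qed

lemma det2_near_one:
  fixes a b c d :: real
  shows "\<bar>a * d - b * c - 1\<bar> \<le> \<bar>a - 1\<bar> + \<bar>d - 1\<bar> + \<bar>a - 1\<bar> * \<bar>d - 1\<bar> + \<bar>b\<bar> * \<bar>c\<bar>"
proof -
  have "a * d - b * c - 1 = (a - 1) + (d - 1) + (a - 1) * (d - 1) - b * c"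
    by (simp add: algebra_simps)
  also have "\<bar>\<dots>\<bar> \<le> \<bar>(a - 1) + (d - 1) + (a - 1) * (d - 1)\<bar> + \<bar>b * c\<bar>"
    by (rule abs_triangle_ineq4)
  also have "\<bar>(a - 1) + (d - 1) + (a - 1) * (d - 1)\<bar> \<le> \<bar>a - 1\<bar> + \<bar>d - 1\<bar> + \<bar>a - 1\<bar> * \<bar>d - 1\<bar>"
    using abs_triangle_ineq[of "(a - 1) + (d - 1)" "(a - 1) * (d - 1)"]
      abs_triangle_ineq[of "a - 1" "d - 1"] by (simp add: abs_mult)
  finally show ?thesis by (simp add: abs_mult)
qed

lemma principal_minor_near_one:
  fixes A :: "real^4^4"
  assumes A: "bordered A"
    and d2: "\<bar>A$2$2 - 1\<bar> \<le> c" and d3: "\<bar>A$3$3 - 1\<bar> \<le> c"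
    and o23: "\<bar>A$2$3\<bar> \<le> c" and o32: "\<bar>A$3$2\<bar> \<le> c" and c: "c \<le> 1/2"
  shows "\<bar>principal_minor A S - 1\<bar> \<le> 3 * c"
proof -
  have c0: "0 \<le> c" using o23 by linarith
  have "\<bar>A$2$2 - 1\<bar> * \<bar>A$3$3 - 1\<bar> \<le> c * c" and "\<bar>A$2$3\<bar> * \<bar>A$3$2\<bar> \<le> c * c"
    using d2 d3 o23 o32 c0 by (auto intro!: mult_mono)
  then have "\<bar>A$2$2 * A$3$3 - A$2$3 * A$3$2 - 1\<bar> \<le> c + c + c * c + c * c"
    using det2_near_one[of "A$2$2" "A$3$3" "A$2$3" "A$3$2"] d2 d3 by linarith
  also have "\<dots> \<le> 3 * c" using mult_left_mono[OF c c0] by simp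
  finally have block: "\<bar>A$2$2 * A$3$3 - A$2$3 * A$3$2 - 1\<bar> \<le> 3 * c" .
  have "S \<inter> {2, 3} = (if 2 \<in> S then {2} else {}) \<union> (if 3 \<in> S then {3} else {})" by auto
  then have "principal_minor A S \<in> {1, A$2$2, A$3$3, A$2$2 * A$3$3 - A$2$3 * A$3$2}"
    using principal_minor_bordered[OF A, of S] by (cases "2 \<in> S"; cases "3 \<in> S") simp_all
  then show ?thesis using d2 d3 c0 block by auto
qed

section \<open>Uniform estimates for the net \<open>x\<^sub>\<epsilon>\<close>\<close>

lemma partials_bounded_lipschitz:
  assumes f: "smooth f"
  shows "\<exists>G L. 0 \<le> L \<and> (\<forall>i p. norm p \<le> r \<longrightarrow> \<bar>partial f i p\<bar> \<le> G) \<and>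
    (\<forall>i p q. norm p \<le> r \<longrightarrow> norm q \<le> r \<longrightarrow> \<bar>partial f i p - partial f i q\<bar> \<le> L * norm (p - q))"
proof -
  obtain G L where GL: "\<And>i. 0 \<le> L i \<and> (\<forall>p. norm p \<le> r \<longrightarrow> \<bar>partial f i p\<bar> \<le> G i) \<and>
      (\<forall>p q. norm p \<le> r \<longrightarrow> norm q \<le> r \<longrightarrow> \<bar>partial f i p - partial f i q\<bar> \<le> L i * norm (p - q))"
    using continuous_bounded_on_ball[OF C1_continuous[OF partial_C1[OF f]]]
      C1_lipschitz_on_ball[OF partial_C1[OF f]] by metis
  have G: "G i \<le> Max (range G)" and L: "L i \<le> Max (range L)" for i by simp_all
  have "0 \<le> Max (range L)" using GL L order_trans by blast
  moreover have "\<bar>partial f i p\<bar> \<le> Max (range G)" if "norm p \<le> r" for i p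
    using GL G order_trans that by blast
  moreover have "\<bar>partial f i p - partial f i q\<bar> \<le> Max (range L) * norm (p - q)"
    if "norm p \<le> r" "norm q \<le> r" for i p q
    using GL that mult_right_mono[OF L norm_ge_zero] order_trans by blast
  ultimately show ?thesis by blast
qed

lemma strict_delta_net_kicked_ode:
  assumes f: "smooth f" and dn: "strict_delta_net \<delta>"
  shows "\<exists>C>0. \<exists>\<epsilon>1>0. \<forall>\<epsilon>. 0 < \<epsilon> \<longrightarrow> \<epsilon> \<le> 1 \<longrightarrow> \<epsilon> < \<epsilon>1 \<longrightarrow> kicked_ode (partial f) (\<delta> \<epsilon>) \<epsilon> C"
proof -
  obtain C where C: "C > 0" and "\<forall>\<^sub>F \<epsilon> in at_right 0. integral UNIV (\<lambda>u. \<bar>\<delta> \<epsilon> u\<bar>) \<le> C"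
    using dn unfolding strict_delta_net_def by blast
  then obtain \<epsilon>1 where \<epsilon>1: "\<epsilon>1 > 0"
    and int: "\<And>\<epsilon>. 0 < \<epsilon> \<Longrightarrow> \<epsilon> < \<epsilon>1 \<Longrightarrow> integral UNIV (\<lambda>u. \<bar>\<delta> \<epsilon> u\<bar>) \<le> C"
    unfolding eventually_at_right_field by blast
  have "kicked_ode (partial f) (\<delta> \<epsilon>) \<epsilon> C" if "0 < \<epsilon>" "\<epsilon> \<le> 1" "\<epsilon> < \<epsilon>1" for \<epsilon>
  proof
    have "smooth (\<delta> \<epsilon>)" "\<And>u. \<epsilon> < \<bar>u\<bar> \<Longrightarrow> \<delta> \<epsilon> u = 0"
      using dn that unfolding strict_delta_net_def by auto
    then show "continuous_on UNIV (\<delta> \<epsilon>)" "\<And>u. \<epsilon> < \<bar>u\<bar> \<Longrightarrow> \<delta> \<epsilon> u = 0"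
      by (auto intro: C1_continuous smooth_imp_Ck)
    show "integral UNIV (\<lambda>u. \<bar>\<delta> \<epsilon> u\<bar>) \<le> C" using int that by auto
    show "continuous_on UNIV (partial f i)" for i by (rule C1_continuous[OF partial_C1[OF f]])
  qed (use that in auto)
  with C \<epsilon>1 show ?thesis by blast
qed

lemma geodesic_net_kicked_solution:
  assumes gn: "geodesic_net f \<delta> x" and K: "compact K"
  shows "\<exists>\<epsilon>K>0. \<forall>\<epsilon>. 0 < \<epsilon> \<longrightarrow> \<epsilon> \<le> 1 \<longrightarrow> \<epsilon> \<le> \<epsilon>K \<longrightarrow>
    (\<forall>Y\<in>K. kicked_solution (partial f) (\<delta> \<epsilon>) (x \<epsilon> Y) (xdot x \<epsilon> Y) Y)"
proof -
  obtain \<epsilon>K where \<epsilon>K: "\<epsilon>K > 0" and ode: "\<forall>Y\<in>K. \<forall>\<epsilon>\<in>{0<..1}. \<epsilon> \<le> \<epsilon>K \<longrightarrow>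
        (\<forall>U i. ((\<lambda>s. xdot x \<epsilon> Y s $ i) has_real_derivative
                    (1/2 * partial f i (x \<epsilon> Y U) * \<delta> \<epsilon> U)) (at U)) \<and>
        x \<epsilon> Y (-1) = Y \<and> xdot x \<epsilon> Y (-1) = 0"
    using gn K unfolding geodesic_net_def by blast
  have "kicked_solution (partial f) (\<delta> \<epsilon>) (x \<epsilon> Y) (xdot x \<epsilon> Y) Y"
    if "0 < \<epsilon>" "\<epsilon> \<le> 1" "\<epsilon> \<le> \<epsilon>K" "Y \<in> K" for \<epsilon> Y
  proof -
    have "smooth (\<lambda>q. x \<epsilon> (fst q) (snd q))" using gn that unfolding geodesic_net_def by auto
    from has_vector_derivative_component[OF xdot_partial_derivative(1)[where x=x, OF this]]
    show ?thesis using ode that unfolding kicked_solution_def by auto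
  qed
  with \<epsilon>K show ?thesis by blast
qed

lemma flow_near_identity:
  assumes f: "smooth f" and dn: "strict_delta_net \<delta>" and gn: "geodesic_net f \<delta> x"
    and K: "compact K" and c: "0 < c" "c \<le> 1/2"
  shows "\<exists>\<eta>>0. \<exists>\<epsilon>0\<in>{0<..1}. \<forall>\<epsilon>\<in>{0<..\<epsilon>0}. \<forall>X\<in>K. \<forall>U\<le>\<eta>. \<forall>h m k. \<bar>h\<bar> < 1 \<longrightarrow>
    \<bar>x \<epsilon> (X + h *\<^sub>R axis m 1) U $ k - x \<epsilon> X U $ k - h * (if k = m then 1 else 0)\<bar> \<le> c * \<bar>h\<bar>"
proof -
  define K1 where "K1 = {X + v | X v. X \<in> K \<and> v \<in> cball (0::real^2) 1}"
  have K1: "compact K1" unfolding K1_def by (rule compact_sums[OF K compact_cball])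
  have in_K1: "X + v \<in> K1" if "X \<in> K" "norm v \<le> 1" for X v
    using that unfolding K1_def by (auto simp: mem_cball_0)
  obtain R where "R > 0" and R: "\<And>X. X \<in> K1 \<Longrightarrow> norm X \<le> R"
    using compact_imp_bounded[OF K1] bounded_pos by metis
  obtain \<epsilon>K where \<epsilon>K: "\<epsilon>K > 0" and sol: "\<And>\<epsilon> Y. 0 < \<epsilon> \<Longrightarrow> \<epsilon> \<le> 1 \<Longrightarrow> \<epsilon> \<le> \<epsilon>K \<Longrightarrow> Y \<in> K1 \<Longrightarrow>
      kicked_solution (partial f) (\<delta> \<epsilon>) (x \<epsilon> Y) (xdot x \<epsilon> Y) Y"
    using geodesic_net_kicked_solution[OF gn K1] by blast
  obtain C \<epsilon>1 where C: "C > 0" and \<epsilon>1: "\<epsilon>1 > 0"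
    and ode: "\<And>\<epsilon>. 0 < \<epsilon> \<Longrightarrow> \<epsilon> \<le> 1 \<Longrightarrow> \<epsilon> < \<epsilon>1 \<Longrightarrow> kicked_ode (partial f) (\<delta> \<epsilon>) \<epsilon> C"
    using strict_delta_net_kicked_ode[OF f dn] by blast
  obtain G L where L: "0 \<le> L" and G: "\<And>i p. norm p \<le> R + 1 \<Longrightarrow> \<bar>partial f i p\<bar> \<le> G"
    and Lip: "\<And>i p q. norm p \<le> R + 1 \<Longrightarrow> norm q \<le> R + 1 \<Longrightarrow>
      \<bar>partial f i p - partial f i q\<bar> \<le> L * norm (p - q)"
    using partials_bounded_lipschitz[OF f, of "R + 1"] by blast
  have "0 \<le> G" using G[of 0 1] \<open>R > 0\<close> by simp
  obtain T where T: "T > 0" "T \<le> 1" "L * C * T \<le> c" "G * C * T \<le> 1/4"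
    using exists_small_time[of "L * C" "G * C" c] L \<open>0 \<le> G\<close> C c by auto
  define \<eta> where "\<eta> = T / 2"
  define \<epsilon>0 where "\<epsilon>0 = min (T / 2) (min \<epsilon>K (\<epsilon>1 / 2))"
  have "\<bar>x \<epsilon> (X + h *\<^sub>R axis m 1) U $ k - x \<epsilon> X U $ k - h * (if k = m then 1 else 0)\<bar> \<le> c * \<bar>h\<bar>"
    if \<epsilon>: "\<epsilon> \<in> {0<..\<epsilon>0}" and X: "X \<in> K" and U: "U \<le> \<eta>" and h: "\<bar>h\<bar> < 1" for \<epsilon> X U h m k
  proof -
    have \<epsilon>_small: "0 < \<epsilon>" "\<epsilon> \<le> 1" "\<epsilon> \<le> \<epsilon>K" "\<epsilon> < \<epsilon>1" "\<eta> + \<epsilon> \<le> T"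
      using \<epsilon> T \<epsilon>1 by (auto simp: \<epsilon>0_def \<eta>_def)
    interpret kicked_ode "partial f" "\<delta> \<epsilon>" \<epsilon> C by (rule ode) (use \<epsilon>_small in auto)
    define Z where "Z = X + h *\<^sub>R axis m 1"
    have XZ: "X \<in> K1" "Z \<in> K1"
      using in_K1[OF X, of 0] in_K1[OF X, of "h *\<^sub>R axis m 1"] h by (auto simp: Z_def)
    have small: "G * C * (\<eta> + \<epsilon>) \<le> 1/4" "L * C * (\<eta> + \<epsilon>) \<le> c"
      using mult_left_mono[OF \<epsilon>_small(5), of "G * C"] mult_left_mono[OF \<epsilon>_small(5), of "L * C"]
        \<open>0 \<le> G\<close> L C T by auto
    have "0 \<le> \<eta>" using T by (simp add: \<eta>_def)
    from kicked_solutions_close[OF sol[OF \<epsilon>_small(1-3) XZ(1)] sol[OF \<epsilon>_small(1-3) XZ(2)]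
        R[OF XZ(1)] R[OF XZ(2)] G Lip L this small c(2) U]
    have "\<bar>(x \<epsilon> Z U - x \<epsilon> X U) $ k - (Z - X) $ k\<bar> \<le> c * norm (Z - X)" .
    moreover have "(Z - X) $ k = h * (if k = m then 1 else 0)" by (simp add: Z_def axis_def)
    moreover have "norm (Z - X) = \<bar>h\<bar>" by (simp add: Z_def)
    ultimately show ?thesis unfolding Z_def[symmetric] by simp
  qed
  moreover have "\<eta> > 0" "\<epsilon>0 \<in> {0<..1}" using T \<epsilon>K \<epsilon>1 by (auto simp: \<eta>_def \<epsilon>0_def)
  ultimately show ?thesis by blast
qed

lemma tnet_jacobian_bordered:
  assumes "tnet f \<delta> x \<epsilon> differentiable (at p)"
  shows "bordered (jacobian (tnet f \<delta> x \<epsilon>) (at p))"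
proof -
  have exact: "\<bar>jacobian (tnet f \<delta> x \<epsilon>) (at p) $ i $ j - a\<bar> \<le> 0"
    if "\<And>h. tnet f \<delta> x \<epsilon> (p + h *\<^sub>R axis j 1) $ i - tnet f \<delta> x \<epsilon> p $ i = h * a" for i j a
    by (rule jacobian_entry_bound[OF assms zero_less_one]) (simp add: that)
  have "tnet f \<delta> x \<epsilon> (p + h *\<^sub>R axis j 1) $ 1 - tnet f \<delta> x \<epsilon> p $ 1 = h * (if j = 1 then 1 else 0)"
    for h j by (simp add: tnet_components axis_def)
  moreover have "tnet f \<delta> x \<epsilon> (p + h *\<^sub>R axis 4 1) $ i - tnet f \<delta> x \<epsilon> p $ i = h * (if i = 4 then 1 else 0)"
    for h i using exhaust_4[of i] by (auto simp: tnet_components axis_def vnet_def)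
  ultimately show ?thesis unfolding bordered_def using exact by simp
qed

lemma tnet_jacobian_block:
  assumes dt: "tnet f \<delta> x \<epsilon> differentiable (at p)"
    and flow: "\<And>h m k. \<bar>h\<bar> < 1 \<Longrightarrow> \<bar>x \<epsilon> (vector [p$2, p$3] + h *\<^sub>R axis m 1) (p$1) $ k
      - x \<epsilon> (vector [p$2, p$3]) (p$1) $ k - h * (if k = m then 1 else 0)\<bar> \<le> c * \<bar>h\<bar>"
  defines "A \<equiv> jacobian (tnet f \<delta> x \<epsilon>) (at p)"
  shows "\<bar>A$2$2 - 1\<bar> \<le> c" "\<bar>A$3$3 - 1\<bar> \<le> c" "\<bar>A$2$3\<bar> \<le> c" "\<bar>A$3$2\<bar> \<le> c"
proof -
  have entry: "\<bar>A$i$j - (if k = m then 1 else 0)\<bar> \<le> c"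
    if shift: "\<And>h. vector [(p + h *\<^sub>R axis j 1)$2, (p + h *\<^sub>R axis j 1)$3]
        = (vector [p$2, p$3] :: real^2) + h *\<^sub>R axis m 1"
    and time: "\<And>h. (p + h *\<^sub>R axis j 1)$1 = p$1"
    and comp: "\<And>q. tnet f \<delta> x \<epsilon> q $ i = x \<epsilon> (vector [q$2, q$3]) (q$1) $ k" for i j m k
    unfolding A_def
  proof (rule jacobian_entry_bound[OF dt zero_less_one])
    fix h :: real assume "\<bar>h\<bar> < 1"
    then show "\<bar>tnet f \<delta> x \<epsilon> (p + h *\<^sub>R axis j 1) $ i - tnet f \<delta> x \<epsilon> p $ i
        - h * (if k = m then 1 else 0)\<bar> \<le> c * \<bar>h\<bar>"
      unfolding comp shift time by (rule flow)
  qed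
  show "\<bar>A$2$2 - 1\<bar> \<le> c" "\<bar>A$3$3 - 1\<bar> \<le> c" "\<bar>A$2$3\<bar> \<le> c" "\<bar>A$3$2\<bar> \<le> c"
    using entry[where i=2 and j=2 and m=1 and k=1] entry[where i=3 and j=3 and m=2 and k=2]
      entry[where i=2 and j=3 and m=2 and k=1] entry[where i=3 and j=2 and m=1 and k=2]
    by (simp_all add: vec_eq_iff forall_2 axis_def tnet_components)
qed

lemma tnet_differentiable_at_scale:
  assumes f: "smooth f" and dn: "strict_delta_net \<delta>" and gn: "geodesic_net f \<delta> x"
    and \<epsilon>: "\<epsilon> \<in> {0<..1}"
  shows "tnet f \<delta> x \<epsilon> differentiable (at p)"
  using tnet_differentiable[OF f] dn gn \<epsilon> unfolding strict_delta_net_def geodesic_net_def by auto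

lemma principal_minors_near_one:
  fixes K :: "(real^2) set"
  assumes f: "smooth f" and dn: "strict_delta_net \<delta>" and gn: "geodesic_net f \<delta> x"
    and K: "compact K" and d: "0 < d"
  shows "\<exists>\<eta>>0. \<exists>\<epsilon>0\<in>{0<..1}. \<forall>\<epsilon>\<in>{0<..\<epsilon>0}. \<forall>p::real^4. p$1 \<le> \<eta> \<and> vector [p$2, p$3] \<in> K \<longrightarrow>
    (\<forall>S. principal_minor (jacobian (tnet f \<delta> x \<epsilon>) (at p)) S \<in> {1 - d <..< 1 + d})"
proof -
  define c where "c = min (1/2) (d/4)"
  have c: "0 < c" "c \<le> 1/2" "3 * c < d" using d by (auto simp: c_def)
  obtain \<eta> \<epsilon>0 where \<eta>: "\<eta> > 0" and \<epsilon>0: "\<epsilon>0 \<in> {0<..1}"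
    and flow: "\<And>\<epsilon> X U h m k. \<epsilon> \<in> {0<..\<epsilon>0} \<Longrightarrow> X \<in> K \<Longrightarrow> U \<le> \<eta> \<Longrightarrow> \<bar>h\<bar> < 1 \<Longrightarrow>
      \<bar>x \<epsilon> (X + h *\<^sub>R axis m 1) U $ k - x \<epsilon> X U $ k - h * (if k = m then 1 else 0)\<bar> \<le> c * \<bar>h\<bar>"
    using flow_near_identity[OF f dn gn K c(1,2)] by blast
  have "principal_minor (jacobian (tnet f \<delta> x \<epsilon>) (at p)) S \<in> {1 - d <..< 1 + d}"
    if \<epsilon>: "\<epsilon> \<in> {0<..\<epsilon>0}" and p: "p$1 \<le> \<eta>" "vector [p$2, p$3] \<in> K" for \<epsilon> p S
  proof -
    have dt: "tnet f \<delta> x \<epsilon> differentiable (at p)"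
      using \<epsilon> \<epsilon>0 by (intro tnet_differentiable_at_scale[OF f dn gn]) auto
    have "\<bar>principal_minor (jacobian (tnet f \<delta> x \<epsilon>) (at p)) S - 1\<bar> \<le> 3 * c"
      using tnet_jacobian_block[OF dt flow[OF \<epsilon> p(2,1)]]
      by (intro principal_minor_near_one[OF tnet_jacobian_bordered[OF dt] _ _ _ _ c(2)])
    then show ?thesis using c(3) by (auto simp: abs_le_iff)
  qed
  with \<eta> \<epsilon>0 show ?thesis by blast
qed

lemma det_eq_principal_minor_UNIV: "det A = principal_minor A UNIV"
  by (simp add: det_def principal_minor_def)

theorem proposition6p4:
  fixes f :: "real^2 \<Rightarrow> real"
    and \<delta> :: "real \<Rightarrow> real \<Rightarrow> real"
    and x :: "real \<Rightarrow> real^2 \<Rightarrow> real \<Rightarrow> real^2"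
  assumes "smooth f"
    and "strict_delta_net \<delta>"
    and "geodesic_net f \<delta> x"
  shows "(\<forall>K::(real^2) set. compact K \<longrightarrow> (\<forall>d>0. \<exists>\<eta>>0. \<exists>\<epsilon>0\<in>{0<..1}.
            \<forall>\<epsilon>\<in>{0<..\<epsilon>0}. \<forall>p::real^4. p$1 \<le> \<eta> \<and> vector [p$2, p$3] \<in> K \<longrightarrow>
              (\<forall>S. principal_minor (jacobian (tnet f \<delta> x \<epsilon>) (at p)) S \<in> {1 - d <..< 1 + d})))
       \<and> (\<forall>K::(real^2) set. compact K \<longrightarrow> (\<exists>\<eta>>0. \<exists>\<epsilon>0\<in>{0<..1}.
            (\<forall>\<epsilon>\<in>{0<..\<epsilon>0}. \<forall>p::real^4. p$1 \<le> \<eta> \<and> vector [p$2, p$3] \<in> K \<longrightarrow>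
              (\<forall>S. principal_minor (jacobian (tnet f \<delta> x \<epsilon>) (at p)) S > 0))
          \<and> strictly_nonzero (\<lambda>\<epsilon> p. det (jacobian (tnet f \<delta> x \<epsilon>) (at p)))
              {p::real^4. p$1 \<le> \<eta> \<and> vector [p$2, p$3] \<in> K}))"
proof (intro conjI allI impI)
  show "\<exists>\<eta>>0. \<exists>\<epsilon>0\<in>{0<..1}. \<forall>\<epsilon>\<in>{0<..\<epsilon>0}. \<forall>p::real^4. p$1 \<le> \<eta> \<and> vector [p$2, p$3] \<in> K \<longrightarrow>
      (\<forall>S. principal_minor (jacobian (tnet f \<delta> x \<epsilon>) (at p)) S \<in> {1 - d <..< 1 + d})"
    if "compact K" "0 < d" for K :: "(real^2) set" and d
    using principal_minors_near_one[OF assms that] .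
next
  fix K :: "(real^2) set" assume K: "compact K"
  text \<open>Minors in \<open>(1/2, 3/2)\<close> are positive, and \<open>|det| \<ge> 1/2 = 1/2 \<epsilon>\<^sup>0\<close>.\<close>
  obtain \<eta> \<epsilon>0 where \<eta>: "\<eta> > 0" and \<epsilon>0: "\<epsilon>0 \<in> {0<..1}" and near: "\<And>\<epsilon> p S. \<epsilon> \<in> {0<..\<epsilon>0} \<Longrightarrow>
      p$1 \<le> \<eta> \<and> vector [p$2, p$3] \<in> K \<Longrightarrow>
      principal_minor (jacobian (tnet f \<delta> x \<epsilon>) (at p)) S \<in> {1/2 <..< 3/2}"
    using principal_minors_near_one[OF assms K, of "1/2"] by auto
  have "strictly_nonzero (\<lambda>\<epsilon> p. det (jacobian (tnet f \<delta> x \<epsilon>) (at p)))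
      {p::real^4. p$1 \<le> \<eta> \<and> vector [p$2, p$3] \<in> K}"
    unfolding strictly_nonzero_def det_eq_principal_minor_UNIV
  proof (intro exI[of _ "1/2"] conjI exI[of _ "0::nat"] bexI[of _ \<epsilon>0] ballI)
    fix \<epsilon> p assume "\<epsilon> \<in> {0<..\<epsilon>0}" "p \<in> {p::real^4. p$1 \<le> \<eta> \<and> vector [p$2, p$3] \<in> K}"
    then show "1/2 * \<epsilon> ^ 0 \<le> \<bar>principal_minor (jacobian (tnet f \<delta> x \<epsilon>) (at p)) UNIV\<bar>"
      using near[of \<epsilon> p UNIV] by auto
  qed (use \<epsilon>0 in auto)
  moreover have "\<forall>\<epsilon>\<in>{0<..\<epsilon>0}. \<forall>p::real^4. p$1 \<le> \<eta> \<and> vector [p$2, p$3] \<in> K \<longrightarrow>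
      (\<forall>S. principal_minor (jacobian (tnet f \<delta> x \<epsilon>) (at p)) S > 0)"
  proof (intro ballI allI impI)
    fix \<epsilon> and p :: "real^4" and S assume "\<epsilon> \<in> {0<..\<epsilon>0}" "p$1 \<le> \<eta> \<and> vector [p$2, p$3] \<in> K"
    from near[OF this, of S] show "principal_minor (jacobian (tnet f \<delta> x \<epsilon>) (at p)) S > 0" by simp
  qed
  ultimately show "\<exists>\<eta>>0. \<exists>\<epsilon>0\<in>{0<..1}.
      (\<forall>\<epsilon>\<in>{0<..\<epsilon>0}. \<forall>p::real^4. p$1 \<le> \<eta> \<and> vector [p$2, p$3] \<in> K \<longrightarrow>
        (\<forall>S. principal_minor (jacobian (tnet f \<delta> x \<epsilon>) (at p)) S > 0))
      \<and> strictly_nonzero (\<lambda>\<epsilon> p. det (jacobian (tnet f \<delta> x \<epsilon>) (at p)))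
          {p::real^4. p$1 \<le> \<eta> \<and> vector [p$2, p$3] \<in> K}"
    using \<eta> \<epsilon>0 by blast
qed

end
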